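(* Define $A_0=E_1$ and $B_0=E_2F_3q^{-G_1-G_3}-q^{-1}F_3q^{-G_1-G_3}E_2$, let $X=A_0B_0-q^{-2}B_0A_0$, and recursively for $k\ge1$ $$A_k=[2]_q^{-1}(A_{k-1}X-XA_{k-1}),\qquad B_k=[2]_q^{-1}(XB_{k-1}-B_{k-1}X).$$ Let $\mathcal E_\alpha(\zeta)=\sum_{k\ge0}A_k\zeta^k$, $\mathcal E_{\delta-\alpha}(\zeta)=\sum_{k\ge0}B_k\zeta^k$ and $\mathcal E'_\alpha(\zeta)=\zeta\bigl(\mathcal E_\alpha(\zeta)B_0-q^{-2}B_0\mathcal E_\alpha(\zeta)\bigr)$. Then in $\mathrm U_q(\mathfrak{gl}_3)[[\zeta]]$: (i) $B_0=F_1q^{-G_1-G_2}$; (ii) $\mathcal E_\alpha(\zeta)=\kappa_q^{-1}N'_{21}N'_{11}(-q^{-2}\zeta)^{-1}$; (iii) $\mathcal E_{\delta-\alpha}(\zeta)=\kappa_q^{-1}q^{-1}N'_{11}(-q^{-2}\zeta)^{-1}N'_{12}$; (iv) $1+\kappa_q\mathcal E'_\alpha(\zeta)=N'_{11}(-q^{-2}\zeta)^{-1}N''_{22}(-q^{-2}\zeta)$.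
   Context: Setting: $\hbar\in\mathbb C$, $q=e^\hbar$, $q^2\neq1$, $\kappa_q=q-q^{-1}$, $[\nu]_q=(q^\nu-q^{-\nu})/\kappa_q$ (so $[2]_q=q+q^{-1}$, assumed nonzero). Let $\mathfrak g=\mathbb CG_1\oplus\mathbb CG_2\oplus\mathbb CG_3$ and define linear forms $\alpha_1,\alpha_2$ on $\mathfrak g$ by $\alpha_1(G_1)=1,\alpha_1(G_2)=-1,\alpha_1(G_3)=0$, $\alpha_2(G_1)=0,\alpha_2(G_2)=1,\alpha_2(G_3)=-1$; put $H_1=G_1-G_2$, $H_2=G_2-G_3$. $\mathrm U_q(\mathfrak{gl}_3)$ is the unital associative $\mathbb C$-algebra generated by $E_1,E_2,F_1,F_2$ and symbols $q^X$, $X\in\mathfrak g$, with relations $q^0=1$, $q^{X_1}q^{X_2}=q^{X_1+X_2}$, $q^XE_iq^{-X}=q^{\alpha_i(X)}E_i$, $q^XF_iq^{-X}=q^{-\alpha_i(X)}F_i$, $[E_i,F_j]=\delta_{ij}(q^{H_i}-q^{-H_i})/\kappa_q$, and for $i\ne j$ the $q$-Serre relations $E_i^2E_j-[2]_qE_iE_jE_i+E_jE_i^2=0$, $F_i^2F_j-[2]_qF_iF_jF_i+F_jF_i^2=0$. For $\nu\in\mathbb C$ one writes $q^{X+\nu}=q^\nu q^X$. Further $E_3=E_1E_2-q^{-1}E_2E_1$, $F_3=F_2F_1-qF_1F_2$. Matrix entries: in $\mathrm U_q(\mathfrak{gl}_3)[[\zeta]]$ ($\zeta$ a formal variable; series with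 constant term $1$ are invertible) let $N'_{11}(\zeta)=1-\zeta q^{-2G_1}$, $N'_{22}(\zeta)=1-\zeta q^{-2G_2}$, $N'_{33}(\zeta)=1-\zeta q^{-2G_3}$, $N'_{12}=\kappa_q qF_1q^{-G_1-G_2}$, $N'_{23}=\kappa_q qF_2q^{-G_2-G_3}$, $N'_{13}=\kappa_q qF_3q^{-G_1-G_3}$, $N'_{21}=\kappa_qE_1$, $N'_{32}=\kappa_qE_2$, $N'_{31}=\kappa_qE_3$; and $N''_{22}(\zeta)=N'_{22}(\zeta)-\zeta N'_{21}N'_{11}(\zeta)^{-1}N'_{12}$, $N''_{23}(\zeta)=N'_{23}-N'_{21}N'_{11}(\zeta)^{-1}N'_{13}$, $N''_{32}(\zeta)=N'_{32}-\zeta N'_{31}N'_{11}(\zeta)^{-1}N'_{12}$, $N''_{33}(\zeta)=N'_{33}(\zeta)-\zeta N'_{31}N'_{11}(\zeta)^{-1}N'_{13}$, $N'''_{33}(\zeta)=N''_{33}(\zeta)-\zeta N''_{32}(\zeta)N''_{22}(\zeta)^{-1}N''_{23}(\zeta)$. For $c\in\mathbb C$, $N(c\zeta)$ denotes substitution $\zeta\mapsto c\zeta$. (Interpretation: $A_k$, $B_k$ are the images under Jimbo's evaluation homomorphism of the Khoroshkin–Tolstoy root vectors $e_{\alpha+k\delta}$, $e_{(\delta-\alpha)+k\delta}$ of $\mathrm U_q(\mathcal L(\mathfrak{sl}_3))$; this is not needed for the statement.) *)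

theory Defs
  imports Complex_Main "HOL-Computational_Algebra.Formal_Power_Series"
begin

text \<open>A representation-free rendering of U_q(gl_3): a unital complex algebra is a ring 'a
  together with a central unital ring homomorphism emb from the complex numbers.
  The symbols q^X, X = x1 G1 + x2 G2 + x3 G3 in g, are modelled by qx (x1,x2,x3).
  An identity holds in U_q(gl_3) iff it holds for every such data satisfying the
  defining relations (universal property), so the theorem quantifies over all of them.\<close>

record 'a Uq =
  emb :: "complex \<Rightarrow> 'a"
  hbar :: complex
  qx :: "complex \<times> complex \<times> complex \<Rightarrow> 'a"
  Eg1 :: 'a
  Eg2 :: 'a
  Fg1 :: 'a
  Fg2 :: 'a

definition qq :: "complex \<Rightarrow> complex" where
  "qq h = exp h"

definition qpow :: "complex \<Rightarrow> complex \<Rightarrow> complex" where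
  "qpow h \<nu> = exp (h * \<nu>)"

definition kap :: "complex \<Rightarrow> complex" where
  "kap h = qq h - inverse (qq h)"

definition br2 :: "complex \<Rightarrow> complex" where
  "br2 h = qq h + inverse (qq h)"

definition alpha1 :: "complex \<times> complex \<times> complex \<Rightarrow> complex" where
  "alpha1 X = (case X of (x1, x2, x3) \<Rightarrow> x1 - x2)"

definition alpha2 :: "complex \<times> complex \<times> complex \<Rightarrow> complex" where
  "alpha2 X = (case X of (x1, x2, x3) \<Rightarrow> x2 - x3)"

definition gadd :: "complex \<times> complex \<times> complex \<Rightarrow> complex \<times> complex \<times> complex \<Rightarrow> complex \<times> complex \<times> complex" where
  "gadd X Y = (case X of (x1, x2, x3) \<Rightarrow> case Y of (y1, y2, y3) \<Rightarrow> (x1 + y1, x2 + y2, x3 + y3))"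

definition gneg :: "complex \<times> complex \<times> complex \<Rightarrow> complex \<times> complex \<times> complex" where
  "gneg X = (case X of (x1, x2, x3) \<Rightarrow> (- x1, - x2, - x3))"

definition is_Uq_gl3 :: "('a::ring_1) Uq \<Rightarrow> bool" where
  "is_Uq_gl3 U \<longleftrightarrow>
     emb U 1 = 1 \<and>
     (\<forall>a b. emb U (a + b) = emb U a + emb U b) \<and>
     (\<forall>a b. emb U (a * b) = emb U a * emb U b) \<and>
     (\<forall>a x. emb U a * x = x * emb U a) \<and>
     qx U (0, 0, 0) = 1 \<and>
     (\<forall>X Y. qx U X * qx U Y = qx U (gadd X Y)) \<and>
     (\<forall>X. qx U X * Eg1 U * qx U (gneg X) = emb U (qpow (hbar U) (alpha1 X)) * Eg1 U) \<and>
     (\<forall>X. qx U X * Eg2 U * qx U (gneg X) = emb U (qpow (hbar U) (alpha2 X)) * Eg2 U) \<and>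
     (\<forall>X. qx U X * Fg1 U * qx U (gneg X) = emb U (qpow (hbar U) (- alpha1 X)) * Fg1 U) \<and>
     (\<forall>X. qx U X * Fg2 U * qx U (gneg X) = emb U (qpow (hbar U) (- alpha2 X)) * Fg2 U) \<and>
     Eg1 U * Fg1 U - Fg1 U * Eg1 U
       = emb U (inverse (kap (hbar U))) * (qx U (1, -1, 0) - qx U (-1, 1, 0)) \<and>
     Eg2 U * Fg2 U - Fg2 U * Eg2 U
       = emb U (inverse (kap (hbar U))) * (qx U (0, 1, -1) - qx U (0, -1, 1)) \<and>
     Eg1 U * Fg2 U - Fg2 U * Eg1 U = 0 \<and>
     Eg2 U * Fg1 U - Fg1 U * Eg2 U = 0 \<and>
     Eg1 U * Eg1 U * Eg2 U - emb U (br2 (hbar U)) * Eg1 U * Eg2 U * Eg1 U + Eg2 U * Eg1 U * Eg1 U = 0 \<and>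
     Eg2 U * Eg2 U * Eg1 U - emb U (br2 (hbar U)) * Eg2 U * Eg1 U * Eg2 U + Eg1 U * Eg2 U * Eg2 U = 0 \<and>
     Fg1 U * Fg1 U * Fg2 U - emb U (br2 (hbar U)) * Fg1 U * Fg2 U * Fg1 U + Fg2 U * Fg1 U * Fg1 U = 0 \<and>
     Fg2 U * Fg2 U * Fg1 U - emb U (br2 (hbar U)) * Fg2 U * Fg1 U * Fg2 U + Fg1 U * Fg2 U * Fg2 U = 0"

definition Eg3 :: "('a::ring_1) Uq \<Rightarrow> 'a" where
  "Eg3 U = Eg1 U * Eg2 U - emb U (inverse (qq (hbar U))) * Eg2 U * Eg1 U"

definition Fg3 :: "('a::ring_1) Uq \<Rightarrow> 'a" where
  "Fg3 U = Fg2 U * Fg1 U - emb U (qq (hbar U)) * Fg1 U * Fg2 U"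

text \<open>Two-sided inverse of a formal power series (exists and is unique when the constant
  term is 1)\<close>
definition fps_inv1 :: "('a::ring_1) fps \<Rightarrow> 'a fps" where
  "fps_inv1 f = (THE g. f * g = 1 \<and> g * f = 1)"

definition fps_scale :: "('a::ring_1) Uq \<Rightarrow> complex \<Rightarrow> 'a fps \<Rightarrow> 'a fps" where
  "fps_scale U c f = Abs_fps (\<lambda>n. emb U (c ^ n) * fps_nth f n)"

definition N'11 :: "('a::ring_1) Uq \<Rightarrow> 'a fps" where
  "N'11 U = 1 - fps_X * fps_const (qx U (-2, 0, 0))"

definition N'22 :: "('a::ring_1) Uq \<Rightarrow> 'a fps" where
  "N'22 U = 1 - fps_X * fps_const (qx U (0, -2, 0))"

definition N'12 :: "('a::ring_1) Uq \<Rightarrow> 'a fps" where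
  "N'12 U = fps_const (emb U (kap (hbar U) * qq (hbar U)) * Fg1 U * qx U (-1, -1, 0))"

definition N'21 :: "('a::ring_1) Uq \<Rightarrow> 'a fps" where
  "N'21 U = fps_const (emb U (kap (hbar U)) * Eg1 U)"

definition N''22 :: "('a::ring_1) Uq \<Rightarrow> 'a fps" where
  "N''22 U = N'22 U - fps_X * N'21 U * fps_inv1 (N'11 U) * N'12 U"

definition A0 :: "('a::ring_1) Uq \<Rightarrow> 'a" where
  "A0 U = Eg1 U"

definition B0 :: "('a::ring_1) Uq \<Rightarrow> 'a" where
  "B0 U = Eg2 U * Fg3 U * qx U (-1, 0, -1)
          - emb U (inverse (qq (hbar U))) * Fg3 U * qx U (-1, 0, -1) * Eg2 U"

definition Xel :: "('a::ring_1) Uq \<Rightarrow> 'a" where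
  "Xel U = A0 U * B0 U - emb U (inverse (qq (hbar U)) ^ 2) * B0 U * A0 U"

primrec Ak :: "('a::ring_1) Uq \<Rightarrow> nat \<Rightarrow> 'a" where
  "Ak U 0 = A0 U"
| "Ak U (Suc k) = emb U (inverse (br2 (hbar U))) * (Ak U k * Xel U - Xel U * Ak U k)"

primrec Bk :: "('a::ring_1) Uq \<Rightarrow> nat \<Rightarrow> 'a" where
  "Bk U 0 = B0 U"
| "Bk U (Suc k) = emb U (inverse (br2 (hbar U))) * (Xel U * Bk U k - Bk U k * Xel U)"

definition E_alpha :: "('a::ring_1) Uq \<Rightarrow> 'a fps" where
  "E_alpha U = Abs_fps (Ak U)"

definition E_delta_alpha :: "('a::ring_1) Uq \<Rightarrow> 'a fps" where
  "E_delta_alpha U = Abs_fps (Bk U)"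

definition E'_alpha :: "('a::ring_1) Uq \<Rightarrow> 'a fps" where
  "E'_alpha U = fps_X * (E_alpha U * fps_const (B0 U)
                 - fps_const (emb U (inverse (qq (hbar U)) ^ 2)) * fps_const (B0 U) * E_alpha U)"

end

theory Submission
  imports Defs
begin

text \<open>The element X commutes with q^{-2G_1} and, once B_0 = F_1 q^{-G_1-G_2} is known, satisfies
  [E_1, X] = -q^{-2}[2]_q E_1 q^{-2G_1} and [X, B_0] = -q^{-2}[2]_q q^{-2G_1} B_0. Hence the
  recursions are solved by A_k = (-q^{-2})^k E_1 q^{-2kG_1} and B_k = (-q^{-2})^k q^{-2kG_1} B_0.
  Since N'_{11}(-q^{-2}\<zeta>) = 1 + q^{-2}\<zeta> q^{-2G_1} is inverted by the geometric series in
  -q^{-2}\<zeta> q^{-2G_1}, (ii) and (iii) follow coefficientwise. For (iv) one multiplies by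
  N'_{11}(-q^{-2}\<zeta>) and compares coefficients: the linear one uses [E_1, F_1], the higher
  ones only the weights of E_1 and B_0 under q^{-2G_1}.\<close>

unbundle fps_syntax

lemma fps_inv1_eqI:
  fixes f g :: "'a::ring_1 fps"
  assumes "f * g = 1" and "g * f = 1"
  shows "fps_inv1 f = g"
  unfolding fps_inv1_def
proof (rule the_equality)
  fix g' assume "f * g' = 1 \<and> g' * f = 1"
  then have "g' = (g * f) * g'" and "f * g' = 1" using assms by simp_all
  then show "g' = g" by (simp add: mult.assoc)
qed (use assms in simp)

lemma one_minus_X_const_mult_geometric:
  fixes a :: "'a::ring_1"
  shows "(1 - fps_X * fps_const a) * Abs_fps (\<lambda>n. a ^ n) = 1"
proof -
  let ?G = "Abs_fps (\<lambda>n. a ^ n)"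
  have "(1 - fps_X * fps_const a) * ?G = ?G - fps_X * (fps_const a * ?G)"
    by (simp add: left_diff_distrib mult.assoc)
  also have "\<dots> = 1" by (rule fps_ext) (simp add: power_eq_if)
  finally show ?thesis .
qed

lemma geometric_mult_one_minus_X_const:
  fixes a :: "'a::ring_1"
  shows "Abs_fps (\<lambda>n. a ^ n) * (1 - fps_X * fps_const a) = 1"
proof -
  let ?G = "Abs_fps (\<lambda>n. a ^ n)"
  have "?G * (1 - fps_X * fps_const a) = ?G - (?G * fps_X) * fps_const a"
    by (simp add: right_diff_distrib mult.assoc)
  also have "\<dots> = 1" by (rule fps_ext) (auto simp: gr0_conv_Suc power_Suc2 simp del: power_Suc)
  finally show ?thesis .
qed

lemma fps_inv1_one_minus_X_const:
  fixes a :: "'a::ring_1"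
  shows "fps_inv1 (1 - fps_X * fps_const a) = Abs_fps (\<lambda>n. a ^ n)"
  by (rule fps_inv1_eqI[OF one_minus_X_const_mult_geometric geometric_mult_one_minus_X_const])

lemma rewrite_left_factors:
  fixes a b c y :: "'a::semigroup_mult"
  shows "a * b = c \<Longrightarrow> a * (b * y) = c * y"
  by (simp add: mult.assoc[symmetric])

locale uq_gl3 =
  fixes U :: "'a::ring_1 Uq"
  assumes relations: "is_Uq_gl3 U"
    and q_square_neq_1: "(qq (hbar U))\<^sup>2 \<noteq> 1"
    and qint_2_nonzero: "br2 (hbar U) \<noteq> 0"
begin

abbreviation "\<iota> \<equiv> emb U"
abbreviation "q \<equiv> qq (hbar U)"
abbreviation "\<kappa> \<equiv> kap (hbar U)"
abbreviation "E1 \<equiv> Eg1 U"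
abbreviation "E2 \<equiv> Eg2 U"
abbreviation "F1 \<equiv> Fg1 U"
abbreviation "F2 \<equiv> Fg2 U"
abbreviation "K \<equiv> qx U"

lemma emb_1: "\<iota> 1 = 1"
  and emb_add: "\<iota> (a + b) = \<iota> a + \<iota> b"
  and emb_mult: "\<iota> (a * b) = \<iota> a * \<iota> b"
  and emb_central: "\<iota> a * x = x * \<iota> a"
  using relations unfolding is_Uq_gl3_def by blast+

lemma emb_0: "\<iota> 0 = 0"
  using emb_add[of 0 0] by simp

lemma emb_diff: "\<iota> (a - b) = \<iota> a - \<iota> b"
  using emb_add[of "a - b" b] by (simp add: eq_diff_eq)

lemma emb_uminus: "\<iota> (- a) = - \<iota> a"
  using emb_diff[of 0 a] by (simp add: emb_0)

lemma emb_mult_power: "(\<iota> a * x) ^ n = \<iota> (a ^ n) * x ^ n"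
proof (induction n)
  case (Suc n)
  then show ?case
    by (simp add: emb_mult mult.assoc) (metis emb_central mult.assoc)
qed (simp add: emb_1)

lemma qx_zero: "K (0, 0, 0) = 1"
  and qx_mult: "K X * K Y = K (gadd X Y)"
  and qx_E1_conj: "K X * E1 * K (gneg X) = \<iota> (qpow (hbar U) (alpha1 X)) * E1"
  and qx_E2_conj: "K X * E2 * K (gneg X) = \<iota> (qpow (hbar U) (alpha2 X)) * E2"
  and qx_F1_conj: "K X * F1 * K (gneg X) = \<iota> (qpow (hbar U) (- alpha1 X)) * F1"
  and qx_F2_conj: "K X * F2 * K (gneg X) = \<iota> (qpow (hbar U) (- alpha2 X)) * F2"
  using relations unfolding is_Uq_gl3_def by blast+

lemma E1_F1_commutator: "E1 * F1 = \<iota> (inverse \<kappa>) * (K (1, -1, 0) - K (-1, 1, 0)) + F1 * E1"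
  and E2_F2_commutator: "E2 * F2 = \<iota> (inverse \<kappa>) * (K (0, 1, -1) - K (0, -1, 1)) + F2 * E2"
  and E1_F2_commute: "E1 * F2 = F2 * E1"
  and E2_F1_commute: "E2 * F1 = F1 * E2"
  using relations unfolding is_Uq_gl3_def by (simp_all only: diff_eq_eq add_0)

lemma qx_gneg_mult: "K (gneg X) * K X = 1"
  by (cases X) (simp add: qx_mult gadd_def gneg_def qx_zero)

lemma qx_commute_of_conj:
  assumes "K X * y * K (gneg X) = z"
  shows "K X * y = z * K X"
  using assms[symmetric] by (simp add: mult.assoc qx_gneg_mult)

lemma qx_E1: "K X * E1 = \<iota> (qpow (hbar U) (alpha1 X)) * (E1 * K X)"
  and qx_E2: "K X * E2 = \<iota> (qpow (hbar U) (alpha2 X)) * (E2 * K X)"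
  and qx_F1: "K X * F1 = \<iota> (qpow (hbar U) (- alpha1 X)) * (F1 * K X)"
  and qx_F2: "K X * F2 = \<iota> (qpow (hbar U) (- alpha2 X)) * (F2 * K X)"
  using qx_commute_of_conj[OF qx_E1_conj] qx_commute_of_conj[OF qx_E2_conj]
    qx_commute_of_conj[OF qx_F1_conj] qx_commute_of_conj[OF qx_F2_conj]
  by (simp_all only: mult.assoc)

lemma emb_left_commute: "x * (\<iota> a * y) = \<iota> a * (x * y)"
  by (metis emb_central mult.assoc)

lemma emb_qx_commute: "K X * \<iota> a = \<iota> a * K X"
  by (simp add: emb_central)

lemma emb_mult_left: "\<iota> a * (\<iota> b * y) = \<iota> (a * b) * y"
  by (simp add: emb_mult mult.assoc)

lemma q_nonzero: "q \<noteq> 0"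
  by (simp add: qq_def)

lemma kappa_eq: "\<kappa> = q - inverse q"
  by (simp add: kap_def)

lemma kappa_nonzero: "\<kappa> \<noteq> 0"
proof
  assume "\<kappa> = 0"
  then have "q * q = 1" using q_nonzero by (simp add: kappa_eq field_simps)
  then show False using q_square_neq_1 by (simp add: power2_eq_square)
qed

lemma kappa_cancel: "\<kappa> * (inverse \<kappa> * c) = c"
  using kappa_nonzero by simp

lemma qpow_numeral: "qpow (hbar U) (numeral n) = q ^ numeral n"
  by (metis exp_of_nat_mult mult.commute of_nat_numeral qpow_def qq_def)

lemma qpow_neg_numeral: "qpow (hbar U) (- numeral n) = inverse q ^ numeral n"
proof -
  have "qpow (hbar U) (- numeral n) = inverse (qpow (hbar U) (numeral n))"
    by (simp add: qpow_def exp_minus[symmetric])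
  then show ?thesis by (simp add: qpow_numeral power_inverse)
qed

lemma qpow_0: "qpow (hbar U) 0 = 1"
  and qpow_1: "qpow (hbar U) 1 = q"
  and qpow_neg_1: "qpow (hbar U) (- 1) = inverse q"
  by (simp_all add: qpow_def qq_def exp_minus)

lemmas commutation_rules =
  qx_E1 qx_E2 qx_F1 qx_F2 qx_mult E1_F1_commutator E2_F2_commutator E1_F2_commute E2_F1_commute

text \<open>Rewriting to a normal form: scalars \<iota> c in front, each q^X to the right of the
  generators, and F_i to the left of E_j. Normal forms are compared only up to the
  complex coefficients, so proofs using it supply the needed scalar identities as rewrite rules.\<close>

lemmas uq_normalize =
  commutation_rules commutation_rules[THEN rewrite_left_factors]
  emb_central[of _ E1, symmetric] emb_central[of _ E2, symmetric] emb_central[of _ F1, symmetric]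
  emb_central[of _ F2, symmetric] emb_qx_commute
  emb_left_commute[of E1] emb_left_commute[of E2] emb_left_commute[of F1] emb_left_commute[of F2]
  emb_left_commute[of "K X" for X] emb_mult[symmetric] emb_mult_left emb_1 emb_0
  qpow_numeral qpow_neg_numeral qpow_0 qpow_1 qpow_neg_1
  alpha1_def alpha2_def gadd_def gneg_def algebra_simps

lemma B0_eq: "B0 U = F1 * K (-1, -1, 0)"
proof -
  have "\<iota> (q * inverse \<kappa>) = 1 + \<iota> (inverse \<kappa> * inverse q)"
    unfolding emb_1[symmetric] emb_add[symmetric] using kappa_nonzero q_nonzero
    by (auto simp: kappa_eq field_simps)
  then show ?thesis
    unfolding B0_def Fg3_def by (simp add: uq_normalize q_nonzero)
qed

text \<open>L is q^{-2G_1}, and the series are evaluated at \<gamma>\<zeta> with \<gamma> = -q^{-2}.\<close>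

abbreviation "L \<equiv> K (-2, 0, 0)"
abbreviation "\<gamma> \<equiv> - (inverse q ^ 2)"
abbreviation "qint2 \<equiv> br2 (hbar U)"

lemma qint2_eq: "qint2 = q + inverse q"
  by (simp add: br2_def)

lemma q_inverse_q_powers: "q\<^sup>2 * inverse q ^ 2 = 1" "q\<^sup>2 * inverse q ^ 4 = inverse q ^ 2"
  using q_nonzero by (simp_all add: field_simps)

lemma Xel_eq: "Xel U = E1 * (F1 * K (-1, -1, 0)) - \<iota> (inverse q ^ 2) * (F1 * (K (-1, -1, 0) * E1))"
  unfolding Xel_def A0_def B0_eq by (simp add: mult.assoc)

lemma Xel_L_commute: "Xel U * L = L * Xel U"
  unfolding Xel_eq by (simp add: uq_normalize q_inverse_q_powers)

lemma E1_Xel_commutator: "E1 * Xel U - Xel U * E1 = \<iota> (\<gamma> * qint2) * (E1 * L)"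
proof -
  have "inverse \<kappa> * inverse q ^ 4 = inverse \<kappa> - qint2 * (inverse q)\<^sup>2"
    using q_nonzero kappa_nonzero unfolding kappa_eq qint2_eq
    by (simp add: field_simps; simp add: eval_nat_numeral algebra_simps)
  then have "\<iota> (inverse \<kappa> * inverse q ^ 4) = \<iota> (inverse \<kappa>) + \<iota> (- (qint2 * (inverse q)\<^sup>2))"
    by (simp add: emb_add[symmetric])
  then show ?thesis
    unfolding Xel_eq by (simp add: uq_normalize q_nonzero q_inverse_q_powers)
qed

lemma Xel_B0_commutator: "Xel U * B0 U - B0 U * Xel U = \<iota> (\<gamma> * qint2) * (L * B0 U)"
proof -
  have "inverse \<kappa> * (inverse q)\<^sup>2 = inverse \<kappa> * q\<^sup>2 - qint2"
    using q_nonzero kappa_nonzero unfolding kappa_eq qint2_eq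
    by (simp add: field_simps; simp add: eval_nat_numeral algebra_simps)
  then have "\<iota> (inverse \<kappa> * (inverse q)\<^sup>2) = \<iota> (inverse \<kappa> * q\<^sup>2) + \<iota> (- qint2)"
    by (simp add: emb_add[symmetric])
  then show ?thesis
    unfolding Xel_eq B0_eq by (simp add: uq_normalize q_nonzero q_inverse_q_powers)
qed

lemma emb_qint2_cancel: "\<iota> (inverse qint2) * (\<iota> (\<gamma> ^ n) * \<iota> (\<gamma> * qint2) * y) = \<iota> (\<gamma> ^ Suc n) * y"
proof -
  have "\<iota> (inverse qint2) * (\<iota> (\<gamma> ^ n) * \<iota> (\<gamma> * qint2) * y)
      = \<iota> (inverse qint2 * (\<gamma> ^ n * (\<gamma> * qint2))) * y"
    by (simp only: emb_mult mult.assoc)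
  also have "inverse qint2 * (\<gamma> ^ n * (\<gamma> * qint2)) = \<gamma> ^ Suc n"
    using qint_2_nonzero by (simp add: field_simps)
  finally show ?thesis .
qed

lemma L_power_Xel_commute: "L ^ n * Xel U = Xel U * L ^ n"
  by (rule power_commuting_commutes[OF Xel_L_commute[symmetric]])

lemma Ak_eq: "Ak U n = \<iota> (\<gamma> ^ n) * (E1 * L ^ n)"
proof (induction n)
  case (Suc n)
  have "Ak U n * Xel U - Xel U * Ak U n = \<iota> (\<gamma> ^ n) * (E1 * (L ^ n * Xel U) - Xel U * E1 * L ^ n)"
    by (simp add: Suc mult.assoc emb_left_commute right_diff_distrib)
  also have "\<dots> = \<iota> (\<gamma> ^ n) * ((E1 * Xel U - Xel U * E1) * L ^ n)"
    by (simp add: L_power_Xel_commute mult.assoc left_diff_distrib)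
  also have "\<dots> = \<iota> (\<gamma> ^ n) * \<iota> (\<gamma> * qint2) * (E1 * L ^ Suc n)"
    by (simp add: E1_Xel_commutator mult.assoc)
  finally show ?case by (simp only: Ak.simps Bk.simps emb_qint2_cancel)
qed (simp add: A0_def emb_1)

lemma Bk_eq: "Bk U n = \<iota> (\<gamma> ^ n) * (L ^ n * B0 U)"
proof (induction n)
  case (Suc n)
  have "Xel U * Bk U n - Bk U n * Xel U = \<iota> (\<gamma> ^ n) * (Xel U * L ^ n * B0 U - L ^ n * B0 U * Xel U)"
    by (simp add: Suc mult.assoc emb_left_commute right_diff_distrib)
  also have "\<dots> = \<iota> (\<gamma> ^ n) * (L ^ n * (Xel U * B0 U - B0 U * Xel U))"
    by (simp add: L_power_Xel_commute[symmetric, THEN rewrite_left_factors] mult.assoc right_diff_distrib)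
  also have "\<dots> = \<iota> (\<gamma> ^ n) * \<iota> (\<gamma> * qint2) * (L ^ Suc n * B0 U)"
    by (simp add: Xel_B0_commutator mult.assoc emb_left_commute[of "L ^ n"]
        power_commutes[THEN rewrite_left_factors])
  finally show ?case by (simp only: Ak.simps Bk.simps emb_qint2_cancel)
qed (simp add: emb_1)

lemma fps_scale_one_minus_X_const:
  "fps_scale U d (1 - fps_X * fps_const a) = 1 - fps_X * fps_const (\<iota> d * a)"
  by (rule fps_ext) (auto simp: fps_scale_def emb_1 emb_0)

lemma inverse_N'11: "fps_inv1 (N'11 U) = Abs_fps (\<lambda>n. L ^ n)"
  unfolding N'11_def by (rule fps_inv1_one_minus_X_const)

lemma inverse_scaled_N'11: "fps_inv1 (fps_scale U d (N'11 U)) = Abs_fps (\<lambda>n. \<iota> (d ^ n) * L ^ n)"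
  unfolding N'11_def fps_scale_one_minus_X_const fps_inv1_one_minus_X_const emb_mult_power ..

lemma E_alpha_eq:
  "E_alpha U = fps_const (\<iota> (inverse \<kappa>)) * N'21 U * fps_inv1 (fps_scale U \<gamma> (N'11 U))"
proof (rule fps_ext)
  fix n
  have "inverse \<kappa> * \<kappa> = 1" using kappa_nonzero by simp
  then show "E_alpha U $ n = (fps_const (\<iota> (inverse \<kappa>)) * N'21 U * fps_inv1 (fps_scale U \<gamma> (N'11 U))) $ n"
    by (simp add: inverse_scaled_N'11 E_alpha_def N'21_def Ak_eq mult.assoc emb_mult_left
        emb_left_commute[of E1] emb_1)
qed

lemma E_delta_alpha_eq:
  "E_delta_alpha U = fps_const (\<iota> (inverse \<kappa> * inverse q)) * fps_inv1 (fps_scale U \<gamma> (N'11 U)) * N'12 U"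
proof (rule fps_ext)
  fix n
  have scalar: "inverse \<kappa> * (inverse q * (\<gamma> ^ n * (\<kappa> * q))) = \<gamma> ^ n"
    using kappa_nonzero q_nonzero by (simp add: field_simps)
  show "E_delta_alpha U $ n
      = (fps_const (\<iota> (inverse \<kappa> * inverse q)) * fps_inv1 (fps_scale U \<gamma> (N'11 U)) * N'12 U) $ n"
    by (simp add: inverse_scaled_N'11 E_delta_alpha_def N'12_def Bk_eq B0_eq mult.assoc emb_mult_left
        emb_left_commute[of "L ^ n"]) (simp only: scalar)
qed

lemma scaled_N'11_mult_nth_Suc:
  "(fps_scale U d (N'11 U) * f) $ Suc n = f $ Suc n - \<iota> d * L * f $ n"
  unfolding N'11_def fps_scale_one_minus_X_const by (simp add: left_diff_distrib mult.assoc)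

lemma scaled_N''22_nth_Suc:
  "fps_scale U d (N''22 U) $ Suc n = - \<iota> d * (if n = 0 then K (0, -2, 0) else 0)
     - \<iota> (d ^ Suc n) * (\<iota> \<kappa> * E1 * (L ^ n * (\<iota> (\<kappa> * q) * B0 U)))"
  by (simp add: fps_scale_def N''22_def N'22_def N'21_def N'12_def inverse_N'11 B0_eq mult.assoc emb_mult
      emb_1 right_diff_distrib)

abbreviation "H \<equiv> 1 + fps_const (\<iota> \<kappa>) * E'_alpha U"

lemma H_nth_0: "H $ 0 = 1"
  by (simp add: E'_alpha_def)

lemma H_nth_Suc: "H $ Suc n = \<iota> \<kappa> * (Ak U n * B0 U - \<iota> (inverse q ^ 2) * (B0 U * Ak U n))"
  by (simp add: E'_alpha_def E_alpha_def mult.assoc)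

lemma L_E1: "L * E1 = \<iota> (inverse q ^ 2) * (E1 * L)"
  by (simp add: qx_E1 alpha1_def qpow_neg_numeral)

lemma L_B0: "L * B0 U = \<iota> (q ^ 2) * (B0 U * L)"
  by (simp add: B0_eq uq_normalize)

lemma B0_E1: "B0 U * E1 = E1 * B0 U - \<iota> (inverse \<kappa>) * (K (0, -2, 0) - L)"
  by (simp add: B0_eq uq_normalize)

lemma scaled_N''22_nth_1: "fps_scale U \<gamma> (N''22 U) $ 1 = H $ 1 - \<iota> \<gamma> * L * H $ 0"
proof -
  have "H $ 1 - \<iota> \<gamma> * L * H $ 0
      = \<iota> \<kappa> * (E1 * B0 U - \<iota> (inverse q ^ 2) * (B0 U * E1)) - \<iota> \<gamma> * L"
    by (simp only: One_nat_def H_nth_Suc H_nth_0 Ak.simps A0_def mult_1_right)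
  also have "\<dots> = \<iota> (\<kappa> * (1 - inverse q ^ 2)) * (E1 * B0 U) + \<iota> (inverse q ^ 2) * K (0, -2, 0)"
    by (simp add: B0_E1 emb_mult_left emb_diff emb_uminus emb_1 algebra_simps mult_ac kappa_cancel)
  also have "\<kappa> * (1 - inverse q ^ 2) = - (\<gamma> * (\<kappa> * (\<kappa> * q)))"
    using q_nonzero by (simp add: kappa_eq field_simps power2_eq_square)
  also have "\<iota> (- (\<gamma> * (\<kappa> * (\<kappa> * q)))) * (E1 * B0 U) + \<iota> (inverse q ^ 2) * K (0, -2, 0)
      = fps_scale U \<gamma> (N''22 U) $ 1"
    unfolding One_nat_def scaled_N''22_nth_Suc
    by (simp add: emb_uminus emb_mult_left mult.assoc emb_left_commute[of E1])
  finally show ?thesis ..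
qed

lemma scaled_N''22_nth_Suc_Suc:
  "fps_scale U \<gamma> (N''22 U) $ Suc (Suc j) = H $ Suc (Suc j) - \<iota> \<gamma> * L * H $ Suc j"
proof -
  txt \<open>The terms in R cancel since L commutes with B_0 E_1.\<close>
  define P where "P = E1 * (L * (L ^ j * B0 U))"
  define R where "R = B0 U * (E1 * (L * L ^ j))"
  have Ak_terms: "Ak U (Suc j) * B0 U = \<iota> (\<gamma> ^ Suc j) * P"
      "B0 U * Ak U (Suc j) = \<iota> (\<gamma> ^ Suc j) * R"
      "L * (Ak U j * B0 U) = \<iota> (\<gamma> ^ j * inverse q ^ 2) * P"
      "L * (B0 U * Ak U j) = \<iota> (\<gamma> ^ j) * R"
    unfolding P_def R_def
    by (simp_all only: Ak_eq) (simp_all add: L_E1 L_B0 L_E1[THEN rewrite_left_factors]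
        L_B0[THEN rewrite_left_factors] mult.assoc emb_mult_left emb_left_commute[of E1]
        emb_left_commute[of L] emb_left_commute[of "B0 U"] q_inverse_q_powers)
  have "H $ Suc (Suc j) - \<iota> \<gamma> * L * H $ Suc j
      = \<iota> \<kappa> * (Ak U (Suc j) * B0 U - \<iota> (inverse q ^ 2) * (B0 U * Ak U (Suc j)))
        - \<iota> \<gamma> * (\<iota> \<kappa> * (L * (Ak U j * B0 U) - \<iota> (inverse q ^ 2) * (L * (B0 U * Ak U j))))"
    by (simp only: H_nth_Suc mult.assoc emb_left_commute[of L] right_diff_distrib)
  also have "\<dots> = \<iota> \<kappa> * (\<iota> (\<gamma> ^ Suc j) * P - \<iota> (inverse q ^ 2) * (\<iota> (\<gamma> ^ Suc j) * R))
        - \<iota> \<gamma> * (\<iota> \<kappa> * (\<iota> (\<gamma> ^ j * inverse q ^ 2) * P - \<iota> (inverse q ^ 2) * (\<iota> (\<gamma> ^ j) * R)))"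
    by (simp only: Ak_terms)
  also have "\<dots> = \<iota> (\<kappa> * \<gamma> ^ Suc j * (1 - inverse q ^ 2)) * P"
    by (simp add: emb_mult_left emb_diff emb_uminus algebra_simps mult_ac)
  also have "\<kappa> * \<gamma> ^ Suc j * (1 - inverse q ^ 2) = - (\<gamma> ^ Suc (Suc j) * (\<kappa> * (\<kappa> * q)))"
    using q_nonzero by (simp add: kappa_eq field_simps power2_eq_square)
  also have "\<iota> (- (\<gamma> ^ Suc (Suc j) * (\<kappa> * (\<kappa> * q)))) * P = fps_scale U \<gamma> (N''22 U) $ Suc (Suc j)"
    unfolding scaled_N''22_nth_Suc P_def
    by (simp add: emb_uminus emb_mult_left mult.assoc emb_left_commute[of E1] emb_left_commute[of L]
        emb_left_commute[of "L ^ j"] power_Suc[of L] del: power_Suc)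
  finally show ?thesis ..
qed

lemma scaled_N'11_mult_H: "fps_scale U \<gamma> (N'11 U) * H = fps_scale U \<gamma> (N''22 U)"
proof (rule fps_ext)
  fix n
  show "(fps_scale U \<gamma> (N'11 U) * H) $ n = fps_scale U \<gamma> (N''22 U) $ n"
  proof (cases n)
    case 0
    then show ?thesis by (simp add: fps_scale_def N'11_def N''22_def N'22_def E'_alpha_def emb_1)
  next
    case (Suc m)
    then show ?thesis
      by (cases m) (simp_all only: scaled_N'11_mult_nth_Suc scaled_N''22_nth_1[unfolded One_nat_def]
          scaled_N''22_nth_Suc_Suc)
  qed
qed

lemma H_eq: "H = fps_inv1 (fps_scale U \<gamma> (N'11 U)) * fps_scale U \<gamma> (N''22 U)"
  (is "H = fps_inv1 ?M * ?N")
proof -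
  have "fps_inv1 ?M * ?M = 1"
    unfolding N'11_def fps_scale_one_minus_X_const fps_inv1_one_minus_X_const
    by (rule geometric_mult_one_minus_X_const)
  then have "H = fps_inv1 ?M * (?M * H)"
    by (simp only: mult.assoc[symmetric] mult_1_left)
  then show ?thesis
    by (simp only: scaled_N'11_mult_H)
qed

end

theorem mainTheorem5:
  fixes U :: "('a::ring_1) Uq"
  assumes "is_Uq_gl3 U"
    and "(qq (hbar U))\<^sup>2 \<noteq> 1"
    and "br2 (hbar U) \<noteq> 0"
  shows "B0 U = Fg1 U * qx U (-1, -1, 0) \<and>
         E_alpha U = fps_const (emb U (inverse (kap (hbar U)))) * N'21 U
                     * fps_inv1 (fps_scale U (- (inverse (qq (hbar U)) ^ 2)) (N'11 U)) \<and>
         E_delta_alpha U = fps_const (emb U (inverse (kap (hbar U)) * inverse (qq (hbar U))))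
                     * fps_inv1 (fps_scale U (- (inverse (qq (hbar U)) ^ 2)) (N'11 U)) * N'12 U \<and>
         1 + fps_const (emb U (kap (hbar U))) * E'_alpha U
           = fps_inv1 (fps_scale U (- (inverse (qq (hbar U)) ^ 2)) (N'11 U))
             * fps_scale U (- (inverse (qq (hbar U)) ^ 2)) (N''22 U)"
proof -
  interpret uq_gl3 U using assms by unfold_locales
  show ?thesis using B0_eq E_alpha_eq E_delta_alpha_eq H_eq by blast
qed

end
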